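(* Let $(q_n),(r_n)$ be complex sequences vanishing faster than any negative power of $|n|$ as $n\to\pm\infty$ with $1-q_nr_n\neq0$ and $1+q_nr_{n+1}\neq0$ for all $n\in\mathbb Z$. Set $D_n=\prod_{j=-\infty}^n(1-q_jr_j)$, $E_n=\prod_{j=-\infty}^n(1+q_jr_{j+1})$, $D_\infty=\prod_{j\in\mathbb Z}(1-q_jr_j)$, $E_\infty=\prod_{j\in\mathbb Z}(1+q_jr_{j+1})$, and define $$u_n=q_n\frac{E_{n-1}}{D_n},\quad v_n=(-r_n+r_{n+1}-q_nr_nr_{n+1})\frac{D_{n-1}}{E_n},\quad p_n=(q_n-q_{n+1}-q_nq_{n+1}r_{n+1})\frac{E_{n-1}}{D_{n+1}},\quad s_n=r_{n+1}\frac{D_n}{E_n}.$$ Then $$1-u_nv_n=\frac1{(1-q_nr_n)(1+q_nr_{n+1})},\qquad 1-p_ns_n=\frac1{(1-q_{n+1}r_{n+1})(1+q_nr_{n+1})},$$ and, with $D_n^{(u,v)}=\prod_{j\le n}(1-u_jv_j)$, $D_\infty^{(u,v)}=\prod_{j\in\mathbb Z}(1-u_jv_j)$, $D_n^{(p,s)}=\prod_{j\le n}(1-p_js_j)$, $D_\infty^{(p,s)}=\prod_{j\in\mathbb Z}(1-p_js_j)$, $$D_n^{(u,v)}=\frac1{D_nE_n},\quad D_\infty^{(u,v)}=\frac1{D_\infty E_\infty},\quad D_n^{(p,s)}=\frac1{D_{n+1}E_n},\quad D_\infty^{(p,s)}=\frac1{D_\infty E_\infty}.$$ *)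

theory Defs
  imports "HOL-Analysis.Analysis"
begin

definition rapid_decay :: "(int \<Rightarrow> complex) \<Rightarrow> bool" where
  "rapid_decay a \<longleftrightarrow>
     (\<forall>k::nat. ((\<lambda>n. real_of_int \<bar>n\<bar> ^ k * norm (a n)) \<longlongrightarrow> 0) at_top \<and>
               ((\<lambda>n. real_of_int \<bar>n\<bar> ^ k * norm (a n)) \<longlongrightarrow> 0) at_bot)"

definition lprod :: "(int \<Rightarrow> complex) \<Rightarrow> int \<Rightarrow> complex" where
  "lprod f n = (\<Prod>k. f (n - int k))"

definition zprod :: "(int \<Rightarrow> complex) \<Rightarrow> complex" where
  "zprod f = lim (\<lambda>m::nat. \<Prod>j\<in>{- int m..int m}. f j)"

definition Dseq :: "(int \<Rightarrow> complex) \<Rightarrow> (int \<Rightarrow> complex) \<Rightarrow> int \<Rightarrow> complex" where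
  "Dseq q r = lprod (\<lambda>j. 1 - q j * r j)"

definition Eseq :: "(int \<Rightarrow> complex) \<Rightarrow> (int \<Rightarrow> complex) \<Rightarrow> int \<Rightarrow> complex" where
  "Eseq q r = lprod (\<lambda>j. 1 + q j * r (j + 1))"

definition Dinf :: "(int \<Rightarrow> complex) \<Rightarrow> (int \<Rightarrow> complex) \<Rightarrow> complex" where
  "Dinf q r = zprod (\<lambda>j. 1 - q j * r j)"

definition Einf :: "(int \<Rightarrow> complex) \<Rightarrow> (int \<Rightarrow> complex) \<Rightarrow> complex" where
  "Einf q r = zprod (\<lambda>j. 1 + q j * r (j + 1))"

definition useq :: "(int \<Rightarrow> complex) \<Rightarrow> (int \<Rightarrow> complex) \<Rightarrow> int \<Rightarrow> complex" where
  "useq q r n = q n * Eseq q r (n - 1) / Dseq q r n"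

definition vseq :: "(int \<Rightarrow> complex) \<Rightarrow> (int \<Rightarrow> complex) \<Rightarrow> int \<Rightarrow> complex" where
  "vseq q r n = (- r n + r (n + 1) - q n * r n * r (n + 1)) * Dseq q r (n - 1) / Eseq q r n"

definition pseq :: "(int \<Rightarrow> complex) \<Rightarrow> (int \<Rightarrow> complex) \<Rightarrow> int \<Rightarrow> complex" where
  "pseq q r n = (q n - q (n + 1) - q n * q (n + 1) * r (n + 1)) * Eseq q r (n - 1) / Dseq q r (n + 1)"

definition sseq :: "(int \<Rightarrow> complex) \<Rightarrow> (int \<Rightarrow> complex) \<Rightarrow> int \<Rightarrow> complex" where
  "sseq q r n = r (n + 1) * Dseq q r n / Eseq q r n"

end

theory Submission
  imports Defs
begin

(* Since D n = (1 - q n r n) D (n-1) and E n = (1 + q n r (n+1)) E (n-1), the partial products cancel in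
   u n v n and p n s n, leaving
     q n (- r n + r (n+1) - q n r n r (n+1)) / ((1 - q n r n) (1 + q n r (n+1)))  and
     (q n - q (n+1) - q n q (n+1) r (n+1)) r (n+1) / ((1 - q (n+1) r (n+1)) (1 + q n r (n+1))),
   and in both cases the numerator is the denominator minus 1. So 1 - u n v n and 1 - p n s n are reciprocals
   of products of factors of D and E, and the product formulas follow by multiplying convergent products.
   Rapid decay is only used through the summability of |q| and |r| on both half-lines, which makes every
   product involved converge to a nonzero limit. *)

lemma summable_norm_of_square_decay:
  fixes a :: "int \<Rightarrow> 'a::real_normed_vector" and h :: "nat \<Rightarrow> int"
  assumes decay: "((\<lambda>n. real_of_int \<bar>n\<bar> ^ 2 * norm (a n)) \<longlongrightarrow> 0) F"
    and h: "filterlim h F sequentially"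
    and growth: "\<And>k. real k \<le> real_of_int \<bar>h k\<bar> + C"
  shows "summable (\<lambda>k. norm (a (h k)))"
proof -
  have "eventually (\<lambda>k. real_of_int \<bar>h k\<bar> ^ 2 * norm (a (h k)) < 1) sequentially"
    using order_tendstoD(2)[OF filterlim_compose[OF decay h]] by simp
  moreover have "eventually (\<lambda>k. 2 * C \<le> real k \<and> 0 < k) sequentially"
    using eventually_ge_at_top[of "nat \<lceil>2 * C\<rceil> + 1"] by eventually_elim linarith
  ultimately have "eventually (\<lambda>k. norm (norm (a (h k))) \<le> 4 * inverse (real k ^ 2)) sequentially"
  proof eventually_elim
    case (elim k)
    then have "(real k / 2) ^ 2 \<le> real_of_int \<bar>h k\<bar> ^ 2"
      using growth[of k] by (intro power_mono) auto
    then have "(real k / 2) ^ 2 * norm (a (h k)) < 1"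
      using elim(1) mult_right_mono[of _ _ "norm (a (h k))"] by fastforce
    with elim(2) show ?case
      by (simp add: field_simps power2_eq_square)
  qed
  then show ?thesis
    by (rule summable_comparison_test_ev) (intro summable_mult inverse_power_summable; simp)
qed

lemma rapid_decay_summable_left:
  assumes "rapid_decay a"
  shows "summable (\<lambda>k. norm (a (c - int k)))"
proof (rule summable_norm_of_square_decay)
  show "((\<lambda>n. real_of_int \<bar>n\<bar> ^ 2 * norm (a n)) \<longlongrightarrow> 0) at_bot"
    using assms unfolding rapid_decay_def by blast
  show "filterlim (\<lambda>k. c - int k) at_bot sequentially"
    unfolding filterlim_at_bot
  proof
    show "eventually (\<lambda>k. c - int k \<le> Z) sequentially" for Z
      using eventually_ge_at_top[of "nat (c - Z)"] by eventually_elim auto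
  qed
  show "real k \<le> real_of_int \<bar>c - int k\<bar> + \<bar>real_of_int c\<bar>" for k
    by linarith
qed

lemma rapid_decay_summable_right:
  assumes "rapid_decay a"
  shows "summable (\<lambda>k. norm (a (c + int k)))"
proof (rule summable_norm_of_square_decay)
  show "((\<lambda>n. real_of_int \<bar>n\<bar> ^ 2 * norm (a n)) \<longlongrightarrow> 0) at_top"
    using assms unfolding rapid_decay_def by blast
  show "filterlim (\<lambda>k. c + int k) at_top sequentially"
    unfolding filterlim_at_top
  proof
    show "eventually (\<lambda>k. Z \<le> c + int k) sequentially" for Z
      using eventually_ge_at_top[of "nat (Z - c)"] by eventually_elim auto
  qed
  show "real k \<le> real_of_int \<bar>c + int k\<bar> + \<bar>real_of_int c\<bar>" for k
    by linarith
qed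

lemma rapid_decay_uminus: "rapid_decay a \<Longrightarrow> rapid_decay (\<lambda>n. - a n)"
  by (simp add: rapid_decay_def)

lemma convergent_prod_one_plus_mult:
  fixes x y :: "nat \<Rightarrow> 'a::{real_normed_field,banach}"
  assumes x: "summable (\<lambda>k. norm (x k))" and y: "summable (\<lambda>k. norm (y k))"
  shows "convergent_prod (\<lambda>k. 1 + x k * y k)"
proof -
  have "eventually (\<lambda>k. norm (y k) < 1) sequentially"
    using order_tendstoD(2)[OF summable_LIMSEQ_zero[OF y]] by simp
  then have "eventually (\<lambda>k. norm (norm (1 + x k * y k - 1)) \<le> norm (x k)) sequentially"
    by eventually_elim (simp add: norm_mult mult_left_le)
  then have "summable (\<lambda>k. norm (1 + x k * y k - 1))"
    by (rule summable_comparison_test_ev[OF _ x])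
  then show ?thesis
    by (intro abs_convergent_prod_imp_convergent_prod summable_imp_abs_convergent_prod)
qed

lemma convergent_prod_rapid_decay_left:
  assumes "rapid_decay a" "rapid_decay b"
  shows "convergent_prod (\<lambda>k. 1 + a (c - int k) * b (d - int k))"
  using assms by (intro convergent_prod_one_plus_mult rapid_decay_summable_left)

lemma convergent_prod_rapid_decay_right:
  assumes "rapid_decay a" "rapid_decay b"
  shows "convergent_prod (\<lambda>k. 1 + a (c + int k) * b (d + int k))"
  using assms by (intro convergent_prod_one_plus_mult rapid_decay_summable_right)

lemma has_prod_lprod:
  "convergent_prod (\<lambda>k. F (n - int k)) \<Longrightarrow> (\<lambda>k. F (n - int k)) has_prod lprod F n"
  unfolding lprod_def by (rule convergent_prod_has_prod)

lemma lprod_nonzero: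
  "convergent_prod (\<lambda>k. F (n - int k)) \<Longrightarrow> (\<And>j. F j \<noteq> 0) \<Longrightarrow> lprod F n \<noteq> 0"
  unfolding lprod_def by (rule prodinf_nonzero)

lemma lprod_rec:
  assumes "convergent_prod (\<lambda>k. F (n - 1 - int k))" and "F n \<noteq> 0"
  shows "lprod F n = F n * lprod F (n - 1)"
proof -
  have "(\<lambda>k. F (n - int (Suc k))) has_prod lprod F (n - 1)"
    using has_prod_lprod[OF assms(1)] by (simp add: algebra_simps)
  then have "(\<lambda>k. F (n - int k)) has_prod (lprod F (n - 1) * F n)"
    using has_prod_Suc_iff[of "\<lambda>k. F (n - int k)"] assms(2) by simp
  then have "lprod F n = lprod F (n - 1) * F n"
    unfolding lprod_def[of F n] by (rule has_prod_unique[symmetric])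
  then show ?thesis
    by (simp add: mult.commute)
qed

lemma prod_symmetric_int_interval_split:
  "(\<Prod>j\<in>{- int m..int m}. F j) = (\<Prod>k<Suc m. F (- int k)) * (\<Prod>k<m. F (1 + int k))"
  "(\<Prod>j\<in>{- int m..int m}. F (j + 1)) = (\<Prod>k<m. F (- int k)) * (\<Prod>k<Suc m. F (1 + int k))"
proof (induction m)
  case (Suc m)
  have "{- int (Suc m)..int (Suc m)} = insert (- 1 - int m) (insert (1 + int m) {- int m..int m})"
    by auto
  with Suc show "(\<Prod>j\<in>{- int (Suc m)..int (Suc m)}. F j) =
      (\<Prod>k<Suc (Suc m). F (- int k)) * (\<Prod>k<Suc m. F (1 + int k))"
    and "(\<Prod>j\<in>{- int (Suc m)..int (Suc m)}. F (j + 1)) =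
      (\<Prod>k<Suc m. F (- int k)) * (\<Prod>k<Suc (Suc m). F (1 + int k))"
    by (simp_all add: algebra_simps)
qed simp_all

lemma
  assumes left: "convergent_prod (\<lambda>k. F (- int k))" and right: "convergent_prod (\<lambda>k. F (1 + int k))"
  shows zprod_eq_prodinf_halves: "zprod F = prodinf (\<lambda>k. F (- int k)) * prodinf (\<lambda>k. F (1 + int k))"
    and tendsto_zprod: "(\<lambda>m. \<Prod>j\<in>{- int m..int m}. F j) \<longlonglongrightarrow> zprod F"
    and tendsto_zprod_shift: "(\<lambda>m. \<Prod>j\<in>{- int m..int m}. F (j + 1)) \<longlonglongrightarrow> zprod F"
proof -
  let ?L = "prodinf (\<lambda>k. F (- int k)) * prodinf (\<lambda>k. F (1 + int k))"
  have "(\<lambda>n. \<Prod>k<n. F (- int k)) \<longlonglongrightarrow> prodinf (\<lambda>k. F (- int k))"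
    and "(\<lambda>n. \<Prod>k<n. F (1 + int k)) \<longlonglongrightarrow> prodinf (\<lambda>k. F (1 + int k))"
    using convergent_prod_LIMSEQ[OF left] convergent_prod_LIMSEQ[OF right]
    by (simp_all add: LIMSEQ_lessThan_iff_atMost)
  note partial = this this[THEN LIMSEQ_Suc]
  have "(\<lambda>m. \<Prod>j\<in>{- int m..int m}. F j) \<longlonglongrightarrow> ?L"
    unfolding prod_symmetric_int_interval_split(1) by (rule tendsto_mult; fact partial)
  moreover have "(\<lambda>m. \<Prod>j\<in>{- int m..int m}. F (j + 1)) \<longlonglongrightarrow> ?L"
    unfolding prod_symmetric_int_interval_split(2) by (rule tendsto_mult; fact partial)
  moreover from calculation(1) show "zprod F = ?L"
    unfolding zprod_def by (rule limI)
  ultimately show "(\<lambda>m. \<Prod>j\<in>{- int m..int m}. F j) \<longlonglongrightarrow> zprod F"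
    and "(\<lambda>m. \<Prod>j\<in>{- int m..int m}. F (j + 1)) \<longlonglongrightarrow> zprod F"
    by simp_all
qed

lemma zprod_nonzero:
  assumes "convergent_prod (\<lambda>k. F (- int k))" "convergent_prod (\<lambda>k. F (1 + int k))"
    and "\<And>j. F j \<noteq> 0"
  shows "zprod F \<noteq> 0"
  using assms by (simp add: zprod_eq_prodinf_halves prodinf_nonzero)

locale decaying_potentials =
  fixes q r :: "int \<Rightarrow> complex"
  assumes decay_q: "rapid_decay q" and decay_r: "rapid_decay r"
    and D_factor_nonzero: "\<And>n. 1 - q n * r n \<noteq> 0"
    and E_factor_nonzero: "\<And>n. 1 + q n * r (n + 1) \<noteq> 0"
begin

lemma convergent_prod_D_factors:
  "convergent_prod (\<lambda>k. 1 - q (n - int k) * r (n - int k))"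
  "convergent_prod (\<lambda>k. 1 - q (1 + int k) * r (1 + int k))"
  using convergent_prod_rapid_decay_left[OF rapid_decay_uminus[OF decay_q] decay_r, of n n]
    convergent_prod_rapid_decay_right[OF rapid_decay_uminus[OF decay_q] decay_r, of 1 1]
  by simp_all

lemma convergent_prod_E_factors:
  "convergent_prod (\<lambda>k. 1 + q (n - int k) * r (n - int k + 1))"
  "convergent_prod (\<lambda>k. 1 + q (1 + int k) * r (1 + int k + 1))"
  using convergent_prod_rapid_decay_left[OF decay_q decay_r, of n "n + 1"]
    convergent_prod_rapid_decay_right[OF decay_q decay_r, of 1 2]
  by (simp_all add: algebra_simps)

lemma Dseq_has_prod: "(\<lambda>k. 1 - q (n - int k) * r (n - int k)) has_prod Dseq q r n"
  unfolding Dseq_def by (rule has_prod_lprod[OF convergent_prod_D_factors(1)])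

lemma Eseq_has_prod: "(\<lambda>k. 1 + q (n - int k) * r (n - int k + 1)) has_prod Eseq q r n"
  unfolding Eseq_def by (rule has_prod_lprod[OF convergent_prod_E_factors(1)])

lemma Dseq_nonzero: "Dseq q r n \<noteq> 0"
  unfolding Dseq_def by (rule lprod_nonzero[OF convergent_prod_D_factors(1) D_factor_nonzero])

lemma Eseq_nonzero: "Eseq q r n \<noteq> 0"
  unfolding Eseq_def by (rule lprod_nonzero[OF convergent_prod_E_factors(1) E_factor_nonzero])

lemma Dseq_rec: "Dseq q r n = (1 - q n * r n) * Dseq q r (n - 1)"
  unfolding Dseq_def by (rule lprod_rec[OF convergent_prod_D_factors(1) D_factor_nonzero])

lemma Eseq_rec: "Eseq q r n = (1 + q n * r (n + 1)) * Eseq q r (n - 1)"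
  unfolding Eseq_def by (rule lprod_rec[OF convergent_prod_E_factors(1) E_factor_nonzero])

lemma tendsto_Dinf:
  "(\<lambda>m. \<Prod>j\<in>{- int m..int m}. 1 - q j * r j) \<longlonglongrightarrow> Dinf q r"
  "(\<lambda>m. \<Prod>j\<in>{- int m..int m}. 1 - q (j + 1) * r (j + 1)) \<longlonglongrightarrow> Dinf q r"
  using tendsto_zprod[of "\<lambda>j. 1 - q j * r j"] tendsto_zprod_shift[of "\<lambda>j. 1 - q j * r j"]
    convergent_prod_D_factors(1)[of 0] convergent_prod_D_factors(2)
  by (simp_all add: Dinf_def)

lemma tendsto_Einf: "(\<lambda>m. \<Prod>j\<in>{- int m..int m}. 1 + q j * r (j + 1)) \<longlonglongrightarrow> Einf q r"
  using tendsto_zprod[of "\<lambda>j. 1 + q j * r (j + 1)"]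
    convergent_prod_E_factors(1)[of 0] convergent_prod_E_factors(2)
  by (simp add: Einf_def)

lemma Dinf_nonzero: "Dinf q r \<noteq> 0"
  using zprod_nonzero[of "\<lambda>j. 1 - q j * r j"] D_factor_nonzero
    convergent_prod_D_factors(1)[of 0] convergent_prod_D_factors(2)
  by (simp add: Dinf_def)

lemma Einf_nonzero: "Einf q r \<noteq> 0"
  using zprod_nonzero[of "\<lambda>j. 1 + q j * r (j + 1)"] E_factor_nonzero
    convergent_prod_E_factors(1)[of 0] convergent_prod_E_factors(2)
  by (simp add: Einf_def)

lemma one_minus_uv: "1 - useq q r n * vseq q r n = 1 / ((1 - q n * r n) * (1 + q n * r (n + 1)))"
proof -
  let ?f = "1 - q n * r n" and ?g = "1 + q n * r (n + 1)"
  have "useq q r n * vseq q r n = q n * (- r n + r (n + 1) - q n * r n * r (n + 1)) / (?f * ?g)"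
    using Dseq_nonzero[of "n - 1"] Eseq_nonzero[of "n - 1"]
    by (simp add: useq_def vseq_def Dseq_rec[of n] Eseq_rec[of n])
  also have "q n * (- r n + r (n + 1) - q n * r n * r (n + 1)) = ?f * ?g - 1"
    by (simp add: algebra_simps)
  finally have "useq q r n * vseq q r n = (?f * ?g - 1) / (?f * ?g)" .
  then show ?thesis
    using D_factor_nonzero[of n] E_factor_nonzero[of n] by (simp add: diff_divide_distrib)
qed

lemma one_minus_ps:
  "1 - pseq q r n * sseq q r n = 1 / ((1 - q (n + 1) * r (n + 1)) * (1 + q n * r (n + 1)))"
proof -
  let ?f = "1 - q (n + 1) * r (n + 1)" and ?g = "1 + q n * r (n + 1)"
  have "pseq q r n * sseq q r n = (q n - q (n + 1) - q n * q (n + 1) * r (n + 1)) * r (n + 1) / (?f * ?g)"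
    using Dseq_nonzero[of n] Eseq_nonzero[of "n - 1"]
    by (simp add: pseq_def sseq_def Dseq_rec[of "n + 1"] Eseq_rec[of n])
  also have "(q n - q (n + 1) - q n * q (n + 1) * r (n + 1)) * r (n + 1) = ?f * ?g - 1"
    by (simp add: algebra_simps)
  finally have "pseq q r n * sseq q r n = (?f * ?g - 1) / (?f * ?g)" .
  then show ?thesis
    using D_factor_nonzero[of "n + 1"] E_factor_nonzero[of n] by (simp add: diff_divide_distrib)
qed

lemma has_prod_one_minus_uv:
  "(\<lambda>k. 1 - useq q r (n - int k) * vseq q r (n - int k)) has_prod (1 / (Dseq q r n * Eseq q r n))"
  using has_prod_inverse[OF has_prod_mult[OF Dseq_has_prod Eseq_has_prod]]
  by (simp add: one_minus_uv inverse_eq_divide)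

lemma has_prod_one_minus_ps:
  "(\<lambda>k. 1 - pseq q r (n - int k) * sseq q r (n - int k)) has_prod (1 / (Dseq q r (n + 1) * Eseq q r n))"
proof -
  have shift: "n + 1 - int k = n - int k + 1" for k
    by simp
  show ?thesis
    using has_prod_inverse[OF has_prod_mult[OF Dseq_has_prod[of "n + 1"] Eseq_has_prod[of n]]]
    by (simp add: one_minus_ps inverse_eq_divide shift)
qed

lemma tendsto_one_minus_uv:
  "(\<lambda>m. \<Prod>j\<in>{- int m..int m}. 1 - useq q r j * vseq q r j) \<longlonglongrightarrow> 1 / (Dinf q r * Einf q r)"
  using tendsto_inverse[OF tendsto_mult[OF tendsto_Dinf(1) tendsto_Einf]] Dinf_nonzero Einf_nonzero
  by (simp add: one_minus_uv prod.distrib [symmetric] prod_dividef inverse_eq_divide)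

lemma tendsto_one_minus_ps:
  "(\<lambda>m. \<Prod>j\<in>{- int m..int m}. 1 - pseq q r j * sseq q r j) \<longlonglongrightarrow> 1 / (Dinf q r * Einf q r)"
  using tendsto_inverse[OF tendsto_mult[OF tendsto_Dinf(2) tendsto_Einf]] Dinf_nonzero Einf_nonzero
  by (simp add: one_minus_ps prod.distrib [symmetric] prod_dividef inverse_eq_divide)

end

theorem proposition3p1:
  fixes q r :: "int \<Rightarrow> complex"
  assumes "rapid_decay q" and "rapid_decay r"
    and "\<And>n. 1 - q n * r n \<noteq> 0"
    and "\<And>n. 1 + q n * r (n + 1) \<noteq> 0"
  defines "u \<equiv> useq q r" and "v \<equiv> vseq q r" and "p \<equiv> pseq q r" and "s \<equiv> sseq q r"
    and "D \<equiv> Dseq q r" and "E \<equiv> Eseq q r"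
  shows "(\<forall>n. 1 - u n * v n = 1 / ((1 - q n * r n) * (1 + q n * r (n + 1)))) \<and>
         (\<forall>n. 1 - p n * s n = 1 / ((1 - q (n + 1) * r (n + 1)) * (1 + q n * r (n + 1)))) \<and>
         (\<forall>n. (\<lambda>k. 1 - u (n - int k) * v (n - int k)) has_prod (1 / (D n * E n))) \<and>
         ((\<lambda>m. \<Prod>j\<in>{- int m..int m}. 1 - u j * v j) \<longlonglongrightarrow> 1 / (Dinf q r * Einf q r)) \<and>
         (\<forall>n. (\<lambda>k. 1 - p (n - int k) * s (n - int k)) has_prod (1 / (D (n + 1) * E n))) \<and>
         ((\<lambda>m. \<Prod>j\<in>{- int m..int m}. 1 - p j * s j) \<longlonglongrightarrow> 1 / (Dinf q r * Einf q r))"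
proof -
  interpret decaying_potentials q r
    using assms(1-4) by unfold_locales
  show ?thesis
    unfolding u_def v_def p_def s_def D_def E_def
    using one_minus_uv one_minus_ps has_prod_one_minus_uv tendsto_one_minus_uv
      has_prod_one_minus_ps tendsto_one_minus_ps
    by blast
qed

end
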